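(* Let $\Gamma$ be a finite constraint language, $\mathbf{I}$ a CSP instance with incidence graph $G$, and $q,k\in\mathbb{N}$. If $G$ has no $(q,k+1)$-separation, then $\mathbf{I}$ is $(q,k)$-nice.
   Context: A CSP instance is a finite set of constraints $(S,R)$ ($S$ a sequence of variables, $R$ a relation over a finite domain $\mathcal{D}$); its incidence graph $G$ is the bipartite graph on variables and constraints with $x\sim C$ iff $x$ in the scope of $C$. A $(q,k)$-separation of $G$ is a partition $(A,S,B)$ of $V(G)$ with $S$ consisting of variable vertices, $N(A),N(B)\subseteq S$, $|S|\le k$, and $|A|,|B|\ge q$. For $\alpha:X\to\mathcal{D}$, $\mathbf{I}|_\alpha$ restricts each relation to tuples consistent with $\alpha$ and removes positions of variables in $X$; $X$ is a strong backdoor into $\mathrm{CSP}(\Gamma)$ if every $\mathbf{I}|_\alpha$ uses only relations from $\Gamma$. $\mathbf{Torso}_G(X)$ is the graph on $X$ with $x_1x_2$ an edge iff adjacent in $G$ or both adjacent to a common component of $G-X$; the width of $X$ is $\mathrm{tw}(\mathbf{Torso}_G(X))$. $\mathbf{I}$ is $(\beta,k)$-nice if $\mathrm{tw}(G)\le\beta+k$, or if whenever $\mathbf{I}$ has a strong backdoor into $\mathrm{CSP}(\Gamma)$ of width at most $k$, it has one, $X$, of width at most $k$ such that $G-X$ has exactly one connected component $C$ with at least $\beta+1$ vertices and $|V(G)\setminus N[C]|\le\beta$. *)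

theory Defs
  imports Main
begin

definition conn_in :: "('a \<Rightarrow> 'a \<Rightarrow> bool) \<Rightarrow> 'a set \<Rightarrow> bool" where
  "conn_in E S \<longleftrightarrow> (\<forall>x\<in>S. \<forall>y\<in>S. (x, y) \<in> {(a, b). a \<in> S \<and> b \<in> S \<and> E a b}\<^sup>*)"

definition is_tree :: "nat set \<Rightarrow> nat set set \<Rightarrow> bool" where
  "is_tree N TE \<longleftrightarrow> finite N \<and> N \<noteq> {} \<and>
     TE \<subseteq> {{a, b} | a b. a \<in> N \<and> b \<in> N \<and> a \<noteq> b} \<and>
     conn_in (\<lambda>a b. {a, b} \<in> TE) N \<and> card TE + 1 = card N"

definition tree_decomp ::
  "'a set \<Rightarrow> ('a \<Rightarrow> 'a \<Rightarrow> bool) \<Rightarrow> nat set \<Rightarrow> nat set set \<Rightarrow> (nat \<Rightarrow> 'a set) \<Rightarrow> bool" where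
  "tree_decomp V E N TE bag \<longleftrightarrow> is_tree N TE \<and>
     (\<forall>t\<in>N. bag t \<subseteq> V) \<and>
     (\<forall>v\<in>V. \<exists>t\<in>N. v \<in> bag t) \<and>
     (\<forall>u\<in>V. \<forall>v\<in>V. E u v \<longrightarrow> (\<exists>t\<in>N. u \<in> bag t \<and> v \<in> bag t)) \<and>
     (\<forall>v\<in>V. conn_in (\<lambda>a b. {a, b} \<in> TE) {t \<in> N. v \<in> bag t})"

definition treewidth :: "'a set \<Rightarrow> ('a \<Rightarrow> 'a \<Rightarrow> bool) \<Rightarrow> int" where
  "treewidth V E = int (LEAST m. \<exists>N TE bag. tree_decomp V E N TE bag \<and> (\<forall>t\<in>N. card (bag t) \<le> m)) - 1"

definition nbh :: "'a set \<Rightarrow> ('a \<Rightarrow> 'a \<Rightarrow> bool) \<Rightarrow> 'a set \<Rightarrow> 'a set" where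
  "nbh V E A = {v \<in> V. v \<notin> A \<and> (\<exists>a\<in>A. E a v)}"

definition cnbh :: "'a set \<Rightarrow> ('a \<Rightarrow> 'a \<Rightarrow> bool) \<Rightarrow> 'a set \<Rightarrow> 'a set" where
  "cnbh V E A = A \<union> nbh V E A"

definition comps :: "'a set \<Rightarrow> ('a \<Rightarrow> 'a \<Rightarrow> bool) \<Rightarrow> 'a set \<Rightarrow> 'a set set" where
  "comps V E X = {C. C \<noteq> {} \<and> C \<subseteq> V - X \<and> conn_in E C \<and>
      (\<forall>D. C \<subseteq> D \<and> D \<subseteq> V - X \<and> conn_in E D \<longrightarrow> D = C)}"

definition torsoE :: "'a set \<Rightarrow> ('a \<Rightarrow> 'a \<Rightarrow> bool) \<Rightarrow> 'a set \<Rightarrow> 'a \<Rightarrow> 'a \<Rightarrow> bool" where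
  "torsoE V E X x1 x2 \<longleftrightarrow> x1 \<in> X \<and> x2 \<in> X \<and> x1 \<noteq> x2 \<and>
     (E x1 x2 \<or> (\<exists>C\<in>comps V E X. (\<exists>a\<in>C. E x1 a) \<and> (\<exists>b\<in>C. E x2 b)))"

definition torso_width :: "'a set \<Rightarrow> ('a \<Rightarrow> 'a \<Rightarrow> bool) \<Rightarrow> 'a set \<Rightarrow> int" where
  "torso_width V E X = treewidth X (torsoE V E X)"

text \<open>A relation over the domain 'd: (arity, set of tuples).\<close>
type_synonym 'd relation = "nat \<times> 'd list set"
type_synonym ('v, 'd) constr = "'v list \<times> 'd relation"
type_synonym ('v, 'd) csp_inst = "('v, 'd) constr set"

definition wf_relation :: "'d relation \<Rightarrow> bool" where
  "wf_relation R \<longleftrightarrow> (\<forall>t\<in>snd R. length t = fst R)"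

definition constraint_language :: "'d relation set \<Rightarrow> bool" where
  "constraint_language \<Gamma> \<longleftrightarrow> finite \<Gamma> \<and> (\<forall>R\<in>\<Gamma>. wf_relation R)"

definition csp_instance :: "('v, 'd) csp_inst \<Rightarrow> bool" where
  "csp_instance I \<longleftrightarrow> finite I \<and>
     (\<forall>(S, R)\<in>I. wf_relation R \<and> length S = fst R)"

definition vars :: "('v, 'd) csp_inst \<Rightarrow> 'v set" where
  "vars I = (\<Union>c\<in>I. set (fst c))"

text \<open>Incidence graph: variables Inl x, constraints Inr C.\<close>
definition igV :: "('v, 'd) csp_inst \<Rightarrow> ('v + ('v, 'd) constr) set" where
  "igV I = Inl ` vars I \<union> Inr ` I"

fun igE :: "('v, 'd) csp_inst \<Rightarrow> ('v + ('v, 'd) constr) \<Rightarrow> ('v + ('v, 'd) constr) \<Rightarrow> bool" where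
  "igE I (Inl x) (Inr c) = (c \<in> I \<and> x \<in> set (fst c))"
| "igE I (Inr c) (Inl x) = (c \<in> I \<and> x \<in> set (fst c))"
| "igE I _ _ = False"

text \<open>Restriction of a constraint by an assignment alpha of the variables in X:
  keep tuples consistent with alpha, delete positions of variables in X.\<close>
definition restrict_constr :: "'v set \<Rightarrow> ('v \<Rightarrow> 'd) \<Rightarrow> ('v, 'd) constr \<Rightarrow> ('v, 'd) constr" where
  "restrict_constr X \<alpha> c = (let S = fst c; T = snd (snd c) in
     (filter (\<lambda>x. x \<notin> X) S,
      (length (filter (\<lambda>x. x \<notin> X) S),
       {map snd (filter (\<lambda>p. fst p \<notin> X) (zip S t)) | t.
          t \<in> T \<and> (\<forall>i<length S. S ! i \<in> X \<longrightarrow> t ! i = \<alpha> (S ! i))})))"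

definition restrict_inst :: "'v set \<Rightarrow> ('v \<Rightarrow> 'd) \<Rightarrow> ('v, 'd) csp_inst \<Rightarrow> ('v, 'd) csp_inst" where
  "restrict_inst X \<alpha> I = restrict_constr X \<alpha> ` I"

text \<open>Strong backdoor into CSP(Gamma). Assignments alpha : X -> D are represented by
  total functions; only their values on X matter.\<close>
definition strong_backdoor :: "'d relation set \<Rightarrow> ('v, 'd) csp_inst \<Rightarrow> 'v set \<Rightarrow> bool" where
  "strong_backdoor \<Gamma> I X \<longleftrightarrow> X \<subseteq> vars I \<and>
     (\<forall>\<alpha>. \<forall>c\<in>restrict_inst X \<alpha> I. snd c \<in> \<Gamma>)"

definition bd_width :: "('v, 'd) csp_inst \<Rightarrow> 'v set \<Rightarrow> int" where
  "bd_width I X = torso_width (igV I) (igE I) (Inl ` X)"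

definition separation :: "('v, 'd) csp_inst \<Rightarrow> nat \<Rightarrow> nat \<Rightarrow>
    ('v + ('v, 'd) constr) set \<Rightarrow> ('v + ('v, 'd) constr) set \<Rightarrow> ('v + ('v, 'd) constr) set \<Rightarrow> bool" where
  "separation I q k A S B \<longleftrightarrow>
     A \<union> S \<union> B = igV I \<and> A \<inter> S = {} \<and> A \<inter> B = {} \<and> S \<inter> B = {} \<and>
     S \<subseteq> Inl ` vars I \<and>
     nbh (igV I) (igE I) A \<subseteq> S \<and> nbh (igV I) (igE I) B \<subseteq> S \<and>
     card S \<le> k \<and> card A \<ge> q \<and> card B \<ge> q"

definition has_separation :: "('v, 'd) csp_inst \<Rightarrow> nat \<Rightarrow> nat \<Rightarrow> bool" where
  "has_separation I q k \<longleftrightarrow> (\<exists>A S B. separation I q k A S B)"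

definition nice :: "'d relation set \<Rightarrow> ('v, 'd) csp_inst \<Rightarrow> nat \<Rightarrow> nat \<Rightarrow> bool" where
  "nice \<Gamma> I \<beta> k \<longleftrightarrow>
     treewidth (igV I) (igE I) \<le> int \<beta> + int k \<or>
     ((\<exists>X. strong_backdoor \<Gamma> I X \<and> bd_width I X \<le> int k) \<longrightarrow>
      (\<exists>X. strong_backdoor \<Gamma> I X \<and> bd_width I X \<le> int k \<and>
         (\<exists>C \<in> comps (igV I) (igE I) (Inl ` X).
            card C \<ge> \<beta> + 1 \<and>
            (\<forall>C' \<in> comps (igV I) (igE I) (Inl ` X). card C' \<ge> \<beta> + 1 \<longrightarrow> C' = C) \<and>
            card (igV I - cnbh (igV I) (igE I) C) \<le> \<beta>)))"

end

theory Submission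
  imports Defs
begin

text \<open>Let \<open>X\<close> be a strong backdoor of width at most \<open>k\<close>. For every component \<open>C\<close> of \<open>G - X\<close>,
  the neighbourhood \<open>N(C)\<close> is a clique of the torso of \<open>X\<close>, so by the Helly property of
  subtrees it lies in one bag of a tree decomposition of the torso and \<open>|N(C)| \<le> k + 1\<close>.
  Hence \<open>(C, N(C), V - N[C])\<close> would be a \<open>(q, k + 1)\<close>-separation unless \<open>C\<close> or \<open>V - N[C]\<close> has
  fewer than \<open>q\<close> vertices. If every component had at most \<open>q\<close> vertices, attaching a leaf with
  bag \<open>N[C]\<close> for each component to the torso decomposition would show \<open>tw(G) \<le> q + k\<close>.
  So unless the treewidth is small there is a component with more than \<open>q\<close> vertices, and
  everything outside its closed neighbourhood, in particular every other component, is small.\<close>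

definition induced_rel :: "('a \<Rightarrow> 'a \<Rightarrow> bool) \<Rightarrow> 'a set \<Rightarrow> ('a \<times> 'a) set" where
  "induced_rel E S = {(a, b). a \<in> S \<and> b \<in> S \<and> E a b}"

lemma conn_in_iff: "conn_in E S \<longleftrightarrow> (\<forall>x\<in>S. \<forall>y\<in>S. (x, y) \<in> (induced_rel E S)\<^sup>*)"
  unfolding conn_in_def induced_rel_def by simp

lemma rtrancl_induced_rel_mono:
  "S \<subseteq> T \<Longrightarrow> (\<And>a b. a \<in> S \<Longrightarrow> b \<in> S \<Longrightarrow> E a b \<Longrightarrow> E' a b) \<Longrightarrow>
   (induced_rel E S)\<^sup>* \<subseteq> (induced_rel E' T)\<^sup>*"
  by (rule rtrancl_mono) (auto simp: induced_rel_def)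

lemma conn_in_cong:
  "(\<And>a b. a \<in> S \<Longrightarrow> b \<in> S \<Longrightarrow> E a b = E' a b) \<Longrightarrow> conn_in E S = conn_in E' S"
  unfolding conn_in_def by (rule arg_cong[where f = "\<lambda>R. \<forall>x\<in>S. \<forall>y\<in>S. (x, y) \<in> R\<^sup>*"]) auto

lemma conn_in_mono:
  "conn_in E S \<Longrightarrow> (\<And>a b. a \<in> S \<Longrightarrow> b \<in> S \<Longrightarrow> E a b \<Longrightarrow> E' a b) \<Longrightarrow> conn_in E' S"
  unfolding conn_in_iff using rtrancl_induced_rel_mono[of S S E E'] by blast

lemma conn_in_singleton: "conn_in E {x}"
  unfolding conn_in_iff by simp

lemma conn_in_Un:
  assumes "conn_in E A" "conn_in E B" "z \<in> A" "z \<in> B"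
  shows "conn_in E (A \<union> B)"
proof -
  let ?R = "(induced_rel E (A \<union> B))\<^sup>*"
  have "(induced_rel E A)\<^sup>* \<subseteq> ?R" "(induced_rel E B)\<^sup>* \<subseteq> ?R"
    by (rule rtrancl_induced_rel_mono; auto)+
  then have "(x, z) \<in> ?R \<and> (z, x) \<in> ?R" if "x \<in> A \<union> B" for x
    using that assms unfolding conn_in_iff by blast
  then show ?thesis unfolding conn_in_iff by (meson rtrancl_trans)
qed

lemma conn_in_attach:
  assumes "conn_in E S" "\<forall>t\<in>T. \<exists>s\<in>S. E t s \<and> E s t"
  shows "conn_in E (S \<union> T)"
proof -
  let ?R = "(induced_rel E (S \<union> T))\<^sup>*"
  have S: "(induced_rel E S)\<^sup>* \<subseteq> ?R" by (rule rtrancl_induced_rel_mono) auto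
  have to_S: "\<exists>s\<in>S. (x, s) \<in> ?R \<and> (s, x) \<in> ?R" if "x \<in> S \<union> T" for x
  proof (cases "x \<in> S")
    case False
    with that assms(2) obtain s where "s \<in> S" "E x s" "E s x" by blast
    then have "(x, s) \<in> induced_rel E (S \<union> T)" "(s, x) \<in> induced_rel E (S \<union> T)"
      using that unfolding induced_rel_def by auto
    then show ?thesis using \<open>s \<in> S\<close> by blast
  qed blast
  show ?thesis unfolding conn_in_iff
  proof (intro ballI)
    fix x y assume "x \<in> S \<union> T" "y \<in> S \<union> T"
    then obtain s1 s2 where "s1 \<in> S" "s2 \<in> S" "(x, s1) \<in> ?R" "(s2, y) \<in> ?R"
      using to_S by blast
    moreover have "(s1, s2) \<in> ?R" using assms(1) S \<open>s1 \<in> S\<close> \<open>s2 \<in> S\<close>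
      unfolding conn_in_iff by blast
    ultimately show "(x, y) \<in> ?R" by (meson rtrancl_trans)
  qed
qed

text \<open>A path through \<open>l\<close> enters and leaves it via \<open>p\<close>.\<close>
lemma conn_in_remove_leaf:
  assumes "conn_in E S" "\<And>s. s \<in> S \<Longrightarrow> E s l \<Longrightarrow> s = p" "\<And>s. s \<in> S \<Longrightarrow> E l s \<Longrightarrow> s = p"
  shows "conn_in E (S - {l})"
proof -
  let ?R = "induced_rel E S" and ?R' = "induced_rel E (S - {l})"
  have path: "(y = l \<and> (x, p) \<in> ?R'\<^sup>*) \<or> (y \<noteq> l \<and> (x, y) \<in> ?R'\<^sup>*)"
    if "x \<in> S - {l}" "(x, y) \<in> ?R\<^sup>*" for x y
    using that(2)
  proof (induction rule: rtrancl_induct)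
    case base then show ?case using that(1) by auto
  next
    case (step y z)
    then have yz: "y \<in> S" "z \<in> S" "E y z" unfolding induced_rel_def by auto
    show ?case
    proof (cases "y = l")
      case True
      then have "z = l \<or> z = p" using yz assms(3) by blast
      then show ?thesis using step.IH True by auto
    next
      case False
      then have xy: "(x, y) \<in> ?R'\<^sup>*" using step.IH by auto
      show ?thesis
      proof (cases "z = l")
        case True
        then show ?thesis using xy yz assms(2) by blast
      next
        case False
        then have "(y, z) \<in> ?R'" using yz \<open>y \<noteq> l\<close> unfolding induced_rel_def by auto
        then show ?thesis using xy False by (meson rtrancl.rtrancl_into_rtrancl)
      qed
    qed
  qed
  show ?thesis unfolding conn_in_iff
  proof (intro ballI)
    fix x y assume "x \<in> S - {l}" "y \<in> S - {l}"
    then have "(x, y) \<in> ?R\<^sup>*" using assms(1) unfolding conn_in_iff by blast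
    then show "(x, y) \<in> ?R'\<^sup>*" using path \<open>x \<in> S - {l}\<close> \<open>y \<in> S - {l}\<close> by blast
  qed
qed

lemma conn_in_has_neighbour:
  assumes "conn_in E S" "l \<in> S" "t \<in> S" "t \<noteq> l"
  obtains s where "s \<in> S" "E l s"
proof -
  have "(l, t) \<in> (induced_rel E S)\<^sup>*" using assms(1-3) unfolding conn_in_iff by blast
  then obtain s where "(l, s) \<in> induced_rel E S"
    using assms(4) by (metis converse_rtranclE)
  then show ?thesis using that unfolding induced_rel_def by blast
qed

definition doubletons :: "'a set \<Rightarrow> 'a set set" where
  "doubletons N = {{a, b} | a b. a \<in> N \<and> b \<in> N \<and> a \<noteq> b}"

lemma is_tree_iff:
  "is_tree N TE \<longleftrightarrow> finite N \<and> N \<noteq> {} \<and> TE \<subseteq> doubletons N \<and>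
     conn_in (\<lambda>a b. {a, b} \<in> TE) N \<and> card TE + 1 = card N"
  unfolding is_tree_def doubletons_def ..

lemma finite_doubletons: "finite N \<Longrightarrow> finite (doubletons N)"
  unfolding doubletons_def by (rule finite_subset[of _ "Pow N"]) auto

lemma card_doubletons_mem: "e \<in> doubletons N \<Longrightarrow> card e = 2"
  unfolding doubletons_def by auto

lemma sum_degrees_doubletons:
  assumes "finite N" "TE \<subseteq> doubletons N"
  shows "(\<Sum>t\<in>N. card {e\<in>TE. t \<in> e}) = 2 * card TE"
proof -
  have fin_TE: "finite TE" using assms finite_doubletons finite_subset by blast
  have "(\<Sum>t\<in>N. card {e\<in>TE. t \<in> e}) = (\<Sum>t\<in>N. \<Sum>e\<in>TE. if t \<in> e then 1 else 0)"
    by (simp add: sum.inter_filter[symmetric] fin_TE)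
  also have "\<dots> = (\<Sum>e\<in>TE. \<Sum>t\<in>N. if t \<in> e then 1 else 0)" by (rule sum.swap)
  also have "\<dots> = (\<Sum>e\<in>TE. card e)"
  proof (rule sum.cong)
    fix e assume "e \<in> TE"
    then have "e \<subseteq> N" using assms(2) unfolding doubletons_def by blast
    then have "{t\<in>N. t \<in> e} = e" by blast
    then show "(\<Sum>t\<in>N. if t \<in> e then 1 else 0) = card e"
      by (simp add: sum.inter_filter[symmetric] assms(1))
  qed simp
  also have "\<dots> = (\<Sum>e\<in>TE. 2)"
    using assms(2) card_doubletons_mem by (intro sum.cong) auto
  finally show ?thesis by simp
qed

lemma leaf_adjacent_eq:
  assumes "TE \<subseteq> doubletons N" "\<forall>e\<in>TE. l \<in> e \<longrightarrow> e = {l, p}" "{l, s} \<in> TE"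
  shows "s = p"
proof -
  have "{l, s} = {l, p}" using assms(2,3) by (metis insertI1)
  moreover have "card {l, s} = 2" using card_doubletons_mem assms(1,3) by blast
  then have "s \<noteq> l" by auto
  ultimately show ?thesis by (auto simp: doubleton_eq_iff)
qed

text \<open>A tree with \<open>n \<ge> 2\<close> nodes and \<open>n - 1\<close> edges has a node of degree at most one,
  since the degrees sum to \<open>2n - 2\<close>; by connectivity its degree is exactly one.\<close>
lemma is_tree_has_leaf:
  assumes "is_tree N TE" "2 \<le> card N"
  obtains l p where "l \<in> N" "p \<in> N" "l \<noteq> p" "{l, p} \<in> TE" "\<forall>e\<in>TE. l \<in> e \<longrightarrow> e = {l, p}"
proof -
  have fin: "finite N" and sub: "TE \<subseteq> doubletons N" and conn: "conn_in (\<lambda>a b. {a, b} \<in> TE) N"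
    and card: "card TE + 1 = card N"
    using assms(1) unfolding is_tree_iff by auto
  have "\<exists>l\<in>N. card {e\<in>TE. l \<in> e} \<le> 1"
  proof (rule ccontr)
    assume "\<not> ?thesis"
    then have "(\<Sum>t\<in>N. 2) \<le> (\<Sum>t\<in>N. card {e\<in>TE. t \<in> e})"
      by (intro sum_mono) (auto simp: not_le Suc_le_eq)
    then show False using sum_degrees_doubletons[OF fin sub] card by simp
  qed
  then obtain l where l: "l \<in> N" "card {e\<in>TE. l \<in> e} \<le> 1" by blast
  have "\<not> N \<subseteq> {l}" using assms(2) card_mono[of "{l}" N] by auto
  then obtain t where "t \<in> N" "t \<noteq> l" by auto
  then obtain p where p: "p \<in> N" "{l, p} \<in> TE"
    using conn_in_has_neighbour[OF conn l(1)] by auto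
  have "finite TE" using fin sub finite_doubletons finite_subset by auto
  then have "finite {e\<in>TE. l \<in> e}" by simp
  moreover have "{{l, p}} \<subseteq> {e\<in>TE. l \<in> e}" using p(2) by simp
  moreover have "card {e\<in>TE. l \<in> e} \<le> card {{l, p}}" using l(2) by simp
  ultimately have "{{l, p}} = {e\<in>TE. l \<in> e}" by (rule card_seteq)
  then have "\<forall>e\<in>TE. l \<in> e \<longrightarrow> e = {l, p}" by (simp add: set_eq_iff)
  moreover have "l \<noteq> p" using card_doubletons_mem sub p(2) by fastforce
  ultimately show ?thesis using that l(1) p by blast
qed

lemma conn_in_remove_leaf_edge:
  assumes "TE \<subseteq> doubletons N" "\<forall>e\<in>TE. l \<in> e \<longrightarrow> e = {l, p}"
    and "conn_in (\<lambda>a b. {a, b} \<in> TE) S"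
  shows "conn_in (\<lambda>a b. {a, b} \<in> TE - {{l, p}}) (S - {l})"
proof -
  have "s = p" if "{l, s} \<in> TE" for s using leaf_adjacent_eq[OF assms(1,2) that] .
  moreover have "s = p" if "{s, l} \<in> TE" for s
    using leaf_adjacent_eq[OF assms(1,2), of s] that by (simp add: insert_commute)
  ultimately have "conn_in (\<lambda>a b. {a, b} \<in> TE) (S - {l})"
    by (intro conn_in_remove_leaf[OF assms(3)]) auto
  moreover have "{a, b} \<in> TE \<longleftrightarrow> {a, b} \<in> TE - {{l, p}}" if "a \<noteq> l" "b \<noteq> l" for a b
    using that by (metis DiffD1 DiffI insertI1 insert_iff singletonD)
  ultimately show ?thesis by (subst conn_in_cong[where E' = "\<lambda>a b. {a, b} \<in> TE"]) auto
qed

lemma doubletons_mem_subset: "e \<in> doubletons N \<Longrightarrow> e \<subseteq> N"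
  unfolding doubletons_def by auto

lemma is_tree_remove_leaf:
  assumes "is_tree N TE" "l \<in> N" "{l, p} \<in> TE" "\<forall>e\<in>TE. l \<in> e \<longrightarrow> e = {l, p}"
  shows "is_tree (N - {l}) (TE - {{l, p}})"
  unfolding is_tree_iff
proof (intro conjI)
  have fin: "finite N" and sub: "TE \<subseteq> doubletons N" and conn: "conn_in (\<lambda>a b. {a, b} \<in> TE) N"
    and card: "card TE + 1 = card N"
    using assms(1) unfolding is_tree_iff by auto
  have "card {l, p} = 2" "{l, p} \<subseteq> N" using sub assms(3) card_doubletons_mem doubletons_mem_subset by blast+
  then show "N - {l} \<noteq> {}" by (cases "p = l") auto
  show "TE - {{l, p}} \<subseteq> doubletons (N - {l})"
  proof
    fix e assume e: "e \<in> TE - {{l, p}}"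
    then obtain a b where "e = {a, b}" "a \<in> N" "b \<in> N" "a \<noteq> b"
      using sub unfolding doubletons_def by blast
    moreover have "l \<notin> e" using assms(4) e by blast
    ultimately show "e \<in> doubletons (N - {l})" unfolding doubletons_def by blast
  qed
  have "finite TE" using fin sub finite_doubletons finite_subset by auto
  then have "card TE \<noteq> 0" using assms(3) by auto
  then show "card (TE - {{l, p}}) + 1 = card (N - {l})"
    using card assms(2,3) by (simp add: card_Diff_singleton)
  show "finite (N - {l})" using fin by simp
  show "conn_in (\<lambda>a b. {a, b} \<in> TE - {{l, p}}) (N - {l})"
    by (rule conn_in_remove_leaf_edge[OF sub assms(4) conn])
qed

lemma subtree_leaf_neighbour:
  assumes "TE \<subseteq> doubletons N" "\<forall>e\<in>TE. l \<in> e \<longrightarrow> e = {l, p}" "l \<in> N"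
    and "conn_in (\<lambda>a b. {a, b} \<in> TE) {t\<in>N. u \<in> bag t}"
    and "u \<in> bag l" "t \<in> N" "u \<in> bag t" "t \<noteq> l"
  shows "u \<in> bag p"
proof -
  have "l \<in> {t\<in>N. u \<in> bag t}" "t \<in> {t\<in>N. u \<in> bag t}" using assms(3,5-7) by auto
  with assms(4) obtain s where s: "s \<in> {t\<in>N. u \<in> bag t}" "{l, s} \<in> TE"
    using assms(8) by (rule conn_in_has_neighbour)
  have "s = p" using assms(1,2) s(2) by (rule leaf_adjacent_eq)
  then show ?thesis using s(1) by simp
qed

lemma subtrees_remove_leaf:
  assumes "TE \<subseteq> doubletons N" "\<forall>e\<in>TE. l \<in> e \<longrightarrow> e = {l, p}"
    and "\<forall>v\<in>K. conn_in (\<lambda>a b. {a, b} \<in> TE) {t\<in>N. v \<in> bag t}"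
  shows "\<forall>v\<in>K. conn_in (\<lambda>a b. {a, b} \<in> TE - {{l, p}}) {t \<in> N - {l}. v \<in> bag t}"
proof
  fix v assume "v \<in> K"
  have "{t \<in> N - {l}. v \<in> bag t} = {t\<in>N. v \<in> bag t} - {l}" by auto
  then show "conn_in (\<lambda>a b. {a, b} \<in> TE - {{l, p}}) {t \<in> N - {l}. v \<in> bag t}"
    using conn_in_remove_leaf_edge[OF assms(1,2)] assms(3) \<open>v \<in> K\<close> by simp
qed

text \<open>Helly property of subtrees. Induction on the tree: if the bag of a leaf \<open>l\<close> does not
  contain \<open>K\<close>, every element of \<open>K\<close> in that bag also lies in the bag of the neighbour of \<open>l\<close>,
  so \<open>l\<close> can be removed.\<close>
lemma is_tree_common_node:
  assumes "is_tree N TE"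
    and "\<forall>v\<in>K. conn_in (\<lambda>a b. {a, b} \<in> TE) {t\<in>N. v \<in> bag t}"
    and "\<forall>u\<in>K. \<forall>v\<in>K. \<exists>t\<in>N. u \<in> bag t \<and> v \<in> bag t"
  shows "\<exists>t\<in>N. K \<subseteq> bag t"
  using assms
proof (induction "card N" arbitrary: N TE rule: less_induct)
  case less
  have fin: "finite N" and ne: "N \<noteq> {}" and sub: "TE \<subseteq> doubletons N"
    using less.prems(1) unfolding is_tree_iff by auto
  show ?case
  proof (cases "card N < 2")
    case True
    then have "card N = 1" using fin ne by (simp add: card_gt_0_iff less_2_cases_iff)
    then obtain t where "N = {t}" by (rule card_1_singletonE)
    then show ?thesis using less.prems(3) by auto
  next
    case False
    then have "2 \<le> card N" by simp
    then obtain l p where lp: "l \<in> N" "p \<in> N" "l \<noteq> p" "{l, p} \<in> TE"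
      and leaf: "\<forall>e\<in>TE. l \<in> e \<longrightarrow> e = {l, p}"
      by (rule is_tree_has_leaf[OF less.prems(1)])
    show ?thesis
    proof (cases "K \<subseteq> bag l")
      case True
      with lp(1) show ?thesis by blast
    next
      case False
      then obtain w where w: "w \<in> K" "w \<notin> bag l" by blast
      have to_p: "u \<in> bag p" if u: "u \<in> K" "u \<in> bag l" for u
      proof -
        obtain t where t: "t \<in> N" "u \<in> bag t" "w \<in> bag t" using less.prems(3) u(1) w(1) by blast
        have "conn_in (\<lambda>a b. {a, b} \<in> TE) {t\<in>N. u \<in> bag t}"
          using less.prems(2) u(1) by blast
        moreover have "t \<noteq> l" using t(3) w(2) by blast
        ultimately show ?thesis by (rule subtree_leaf_neighbour[OF sub leaf lp(1) _ u(2) t(1,2)])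
      qed
      have "\<exists>t\<in>N - {l}. K \<subseteq> bag t"
      proof (rule less.hyps)
        show "card (N - {l}) < card N" using fin lp(1) by (rule card_Diff1_less)
        show "is_tree (N - {l}) (TE - {{l, p}})"
          by (rule is_tree_remove_leaf[OF less.prems(1) lp(1,4) leaf])
        show "\<forall>v\<in>K. conn_in (\<lambda>a b. {a, b} \<in> TE - {{l, p}}) {t \<in> N - {l}. v \<in> bag t}"
          using sub leaf less.prems(2) by (rule subtrees_remove_leaf)
        show "\<forall>u\<in>K. \<forall>v\<in>K. \<exists>t\<in>N - {l}. u \<in> bag t \<and> v \<in> bag t"
        proof (intro ballI)
          fix u v assume uv: "u \<in> K" "v \<in> K"
          then obtain t where t: "t \<in> N" "u \<in> bag t" "v \<in> bag t" using less.prems(3) by blast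
          show "\<exists>t\<in>N - {l}. u \<in> bag t \<and> v \<in> bag t"
          proof (cases "t = l")
            case True
            then show ?thesis using to_p uv t lp(2,3) by blast
          qed (use t in blast)
        qed
      qed
      then show ?thesis by blast
    qed
  qed
qed

lemma tree_decomp_clique_in_bag:
  assumes "tree_decomp V E N TE bag" "K \<subseteq> V" "\<forall>u\<in>K. \<forall>v\<in>K. u \<noteq> v \<longrightarrow> E u v"
  shows "\<exists>t\<in>N. K \<subseteq> bag t"
proof -
  have tree: "is_tree N TE" and cover: "\<forall>v\<in>V. \<exists>t\<in>N. v \<in> bag t"
    and edge: "\<forall>u\<in>V. \<forall>v\<in>V. E u v \<longrightarrow> (\<exists>t\<in>N. u \<in> bag t \<and> v \<in> bag t)"
    and subtree: "\<forall>v\<in>V. conn_in (\<lambda>a b. {a, b} \<in> TE) {t \<in> N. v \<in> bag t}"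
    using assms(1) unfolding tree_decomp_def by auto
  have meet: "\<exists>t\<in>N. u \<in> bag t \<and> v \<in> bag t" if uv: "u \<in> K" "v \<in> K" for u v
  proof (cases "u = v")
    case True
    then show ?thesis using cover assms(2) uv by auto
  next
    case False
    then have "u \<in> V" "v \<in> V" "E u v" using assms(2,3) uv by auto
    then show ?thesis using edge by blast
  qed
  show ?thesis
  proof (rule is_tree_common_node[OF tree])
    show "\<forall>v\<in>K. conn_in (\<lambda>a b. {a, b} \<in> TE) {t \<in> N. v \<in> bag t}"
      using subtree assms(2) by blast
  qed (use meet in blast)
qed

lemma is_tree_attach_leaves:
  assumes tree: "is_tree N TE" and fresh: "\<forall>t\<in>N. t < M" and root: "\<forall>i<c. r i \<in> N"
  shows "is_tree (N \<union> {M..<M + c}) (TE \<union> (\<lambda>i. {M + i, r i}) ` {0..<c})"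
  unfolding is_tree_iff
proof (intro conjI)
  let ?new = "(\<lambda>i. {M + i, r i}) ` {0..<c}"
  have fin: "finite N" and sub: "TE \<subseteq> doubletons N" and conn: "conn_in (\<lambda>a b. {a, b} \<in> TE) N"
    and card: "card TE + 1 = card N" and ne: "N \<noteq> {}"
    using tree unfolding is_tree_iff by auto
  have new_notin: "M + i \<notin> N" for i using fresh by fastforce
  show "finite (N \<union> {M..<M + c})" "N \<union> {M..<M + c} \<noteq> {}" using fin ne by auto
  show "TE \<union> ?new \<subseteq> doubletons (N \<union> {M..<M + c})"
  proof -
    have "doubletons N \<subseteq> doubletons (N \<union> {M..<M + c})" unfolding doubletons_def by blast
    moreover have "{M + i, r i} \<in> doubletons (N \<union> {M..<M + c})" if "i < c" for i
      using root new_notin that unfolding doubletons_def by fastforce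
    ultimately show ?thesis using sub by auto
  qed
  show "conn_in (\<lambda>a b. {a, b} \<in> TE \<union> ?new) (N \<union> {M..<M + c})"
  proof (rule conn_in_attach)
    show "conn_in (\<lambda>a b. {a, b} \<in> TE \<union> ?new) N" using conn by (rule conn_in_mono) auto
    show "\<forall>t\<in>{M..<M + c}. \<exists>s\<in>N. {t, s} \<in> TE \<union> ?new \<and> {s, t} \<in> TE \<union> ?new"
    proof
      fix t assume "t \<in> {M..<M + c}"
      then obtain i where "i < c" "t = M + i" by (metis add_diff_inverse_nat add_less_cancel_left
          atLeastLessThan_iff not_less)
      then show "\<exists>s\<in>N. {t, s} \<in> TE \<union> ?new \<and> {s, t} \<in> TE \<union> ?new"
        using root by (intro bexI[of _ "r i"]) (auto simp: insert_commute)
    qed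
  qed
  have "inj_on (\<lambda>i. {M + i, r i}) {0..<c}"
    using new_notin root by (intro inj_onI) (metis add_left_cancel doubleton_eq_iff atLeastLessThan_iff)
  moreover have "TE \<inter> ?new = {}"
    using sub new_notin doubletons_mem_subset by fastforce
  moreover have "finite TE" using fin sub finite_doubletons finite_subset by auto
  ultimately have "card (TE \<union> ?new) = card TE + c" by (simp add: card_Un_disjoint card_image)
  moreover have "card (N \<union> {M..<M + c}) = card N + c"
    using fin new_notin by (subst card_Un_disjoint) (auto, metis add_diff_inverse_nat not_less)
  ultimately show "card (TE \<union> ?new) + 1 = card (N \<union> {M..<M + c})" using card by simp
qed

lemma treewidth_leE:
  assumes "treewidth V E \<le> int k"
  obtains N TE bag where "tree_decomp V E N TE bag" "\<forall>t\<in>N. card (bag t) \<le> k + 1"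
proof -
  let ?P = "\<lambda>m. \<exists>N TE bag. tree_decomp V E N TE bag \<and> (\<forall>t\<in>N. card (bag t) \<le> m)"
  have "tree_decomp V E {0} {} (\<lambda>_. V)"
    unfolding tree_decomp_def is_tree_def by (auto simp: conn_in_singleton)
  then have "?P (card V)" by fastforce
  then have "?P (LEAST m. ?P m)" by (rule LeastI)
  moreover have "(LEAST m. ?P m) \<le> k + 1" using assms unfolding treewidth_def by linarith
  ultimately show ?thesis using that by (meson order_trans)
qed

lemma treewidth_le_tree_decomp:
  assumes "tree_decomp V E N TE bag" "\<forall>t\<in>N. card (bag t) \<le> m"
  shows "treewidth V E \<le> int m - 1"
proof -
  let ?P = "\<lambda>m. \<exists>N TE bag. tree_decomp V E N TE bag \<and> (\<forall>t\<in>N. card (bag t) \<le> m)"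
  have "(LEAST m. ?P m) \<le> m" using assms by (intro Least_le) blast
  then show ?thesis unfolding treewidth_def by linarith
qed

lemma comps_eq_if_meet:
  assumes "C1 \<in> comps V E X" "C2 \<in> comps V E X" "x \<in> C1" "x \<in> C2"
  shows "C1 = C2"
proof -
  have c1: "C1 \<subseteq> V - X" "conn_in E C1" "\<forall>D. C1 \<subseteq> D \<and> D \<subseteq> V - X \<and> conn_in E D \<longrightarrow> D = C1"
    using assms(1) unfolding comps_def by auto
  have c2: "C2 \<subseteq> V - X" "conn_in E C2" "\<forall>D. C2 \<subseteq> D \<and> D \<subseteq> V - X \<and> conn_in E D \<longrightarrow> D = C2"
    using assms(2) unfolding comps_def by auto
  have "conn_in E (C1 \<union> C2)" by (rule conn_in_Un[OF c1(2) c2(2) assms(3,4)])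
  moreover have "C1 \<union> C2 \<subseteq> V - X" using c1(1) c2(1) by blast
  ultimately have "C1 \<union> C2 = C1" "C1 \<union> C2 = C2"
    using c1(3)[rule_format, of "C1 \<union> C2"] c2(3)[rule_format, of "C1 \<union> C2"] by auto
  then show ?thesis by simp
qed

lemma nbh_comps_subset:
  assumes sym: "\<And>a b. E a b = E b a" and C: "C \<in> comps V E X"
  shows "nbh V E C \<subseteq> X"
proof
  fix v assume v: "v \<in> nbh V E C"
  have c: "C \<subseteq> V - X" "conn_in E C" "\<forall>D. C \<subseteq> D \<and> D \<subseteq> V - X \<and> conn_in E D \<longrightarrow> D = C"
    using C unfolding comps_def by auto
  obtain a where a: "a \<in> C" "E a v" "v \<in> V" "v \<notin> C" using v unfolding nbh_def by blast
  have "conn_in E (C \<union> {v})"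
    by (rule conn_in_attach[OF c(2)]) (use a sym in blast)
  then have "C \<union> {v} \<subseteq> V - X \<Longrightarrow> C \<union> {v} = C" using c(3)[rule_format, of "C \<union> {v}"] by auto
  then show "v \<in> X" using c(1) a(3,4) by blast
qed

text \<open>The component of \<open>v\<close> consists of the vertices reachable from \<open>v\<close> in \<open>G - X\<close>.\<close>
lemma comps_cover:
  assumes sym: "\<And>a b. E a b = E b a" and v: "v \<in> V" "v \<notin> X"
  obtains C where "C \<in> comps V E X" "v \<in> C"
proof -
  let ?R = "induced_rel E (V - X)"
  define C where "C = {w. (v, w) \<in> ?R\<^sup>*}"
  have vC: "v \<in> C" unfolding C_def by simp
  have CW: "C \<subseteq> V - X"
  proof
    fix w assume "w \<in> C"
    then have "(v, w) \<in> ?R\<^sup>*" unfolding C_def by simp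
    then show "w \<in> V - X"
      by (induction rule: rtrancl_induct) (use v in \<open>auto simp: induced_rel_def\<close>)
  qed
  have to_C: "(v, w) \<in> (induced_rel E C)\<^sup>*" if "(v, w) \<in> ?R\<^sup>*" for w
    using that
  proof (induction rule: rtrancl_induct)
    case (step y z)
    then have "y \<in> C" "z \<in> C" unfolding C_def by auto
    moreover have "E y z" using step(2) unfolding induced_rel_def by auto
    ultimately have "(y, z) \<in> induced_rel E C" unfolding induced_rel_def by auto
    then show ?case using step.IH by (meson rtrancl.rtrancl_into_rtrancl)
  qed simp
  have "sym ((induced_rel E C)\<^sup>*)"
    by (rule sym_rtrancl) (use sym in \<open>auto simp: sym_def induced_rel_def\<close>)
  then have "conn_in E C"
    unfolding conn_in_iff using to_C C_def by (metis mem_Collect_eq rtrancl_trans symD)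
  moreover have "D = C" if "C \<subseteq> D" "D \<subseteq> V - X" "conn_in E D" for D
  proof
    have "(induced_rel E D)\<^sup>* \<subseteq> ?R\<^sup>*" by (rule rtrancl_induced_rel_mono) (use that(2) in auto)
    then show "D \<subseteq> C" using that(1,3) vC unfolding conn_in_iff C_def by blast
  qed (rule that(1))
  ultimately have "C \<in> comps V E X" unfolding comps_def using vC CW by blast
  then show ?thesis using vC that by blast
qed

lemma finite_comps: "finite V \<Longrightarrow> finite (comps V E X)"
  unfolding comps_def by (rule finite_subset[of _ "Pow V"]) auto

lemma nbh_comp_in_bag:
  assumes sym: "\<And>a b. E a b = E b a"
    and td: "tree_decomp X (torsoE V E X) N TE bag" and C: "C \<in> comps V E X"
  shows "\<exists>t\<in>N. nbh V E C \<subseteq> bag t"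
proof (rule tree_decomp_clique_in_bag[OF td])
  show X: "nbh V E C \<subseteq> X" using sym C by (rule nbh_comps_subset)
  show "\<forall>u\<in>nbh V E C. \<forall>v\<in>nbh V E C. u \<noteq> v \<longrightarrow> torsoE V E X u v"
  proof (intro ballI impI)
    fix u v assume u: "u \<in> nbh V E C" and v: "v \<in> nbh V E C" and "u \<noteq> v"
    have "\<exists>a\<in>C. E u a" "\<exists>b\<in>C. E v b" using u v sym unfolding nbh_def by auto
    then show "torsoE V E X u v" unfolding torsoE_def using X u v \<open>u \<noteq> v\<close> C by blast
  qed
qed

lemma card_nbh_comp_le:
  assumes sym: "\<And>a b. E a b = E b a" and "finite X" and "torso_width V E X \<le> int k"
    and C: "C \<in> comps V E X"
  shows "card (nbh V E C) \<le> k + 1"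
proof -
  obtain N TE bag where td: "tree_decomp X (torsoE V E X) N TE bag"
    and bd: "\<forall>t\<in>N. card (bag t) \<le> k + 1"
    using assms(3) unfolding torso_width_def by (rule treewidth_leE)
  obtain t where t: "t \<in> N" "nbh V E C \<subseteq> bag t" using nbh_comp_in_bag[OF sym td C] by blast
  have "bag t \<subseteq> X" using td t(1) unfolding tree_decomp_def by blast
  then have "card (nbh V E C) \<le> card (bag t)" using t(2) assms(2) by (meson card_mono finite_subset)
  then show ?thesis using bd t(1) by fastforce
qed

text \<open>A tree decomposition of the torso of \<open>X\<close> extends to one of the whole graph by
  attaching, for every component \<open>C\<close> of \<open>G - X\<close>, a new leaf with bag \<open>N[C]\<close> to a node whose
  bag contains the clique \<open>N(C)\<close>. The components are enumerated as \<open>comp 0, \<dots>, comp (c - 1)\<close>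
  and the new leaves are the nodes \<open>M, \<dots>, M + c - 1\<close>.\<close>
locale comps_attachment =
  fixes V :: "'a set" and E :: "'a \<Rightarrow> 'a \<Rightarrow> bool" and X :: "'a set"
    and N :: "nat set" and TE :: "nat set set" and bag :: "nat \<Rightarrow> 'a set"
    and c :: nat and comp :: "nat \<Rightarrow> 'a set" and root :: "nat \<Rightarrow> nat" and M :: nat
  assumes sym: "\<And>a b. E a b = E b a"
    and X_subset: "X \<subseteq> V"
    and torso_decomp: "tree_decomp X (torsoE V E X) N TE bag"
    and comp_enum: "bij_betw comp {0..<c} (comps V E X)"
    and root: "\<And>i. i < c \<Longrightarrow> root i \<in> N \<and> nbh V E (comp i) \<subseteq> bag (root i)"
    and fresh: "\<And>t. t \<in> N \<Longrightarrow> t < M"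
begin

definition ext_bag :: "nat \<Rightarrow> 'a set" where
  "ext_bag t = (if t \<in> N then bag t else cnbh V E (comp (t - M)))"

abbreviation ext_nodes :: "nat set" where
  "ext_nodes \<equiv> N \<union> {M..<M + c}"

abbreviation ext_edges :: "nat set set" where
  "ext_edges \<equiv> TE \<union> (\<lambda>i. {M + i, root i}) ` {0..<c}"

lemma new_node_iff: "t \<in> {M..<M + c} \<longleftrightarrow> (\<exists>i<c. t = M + i)"
  by (auto intro: exI[of _ "t - M"])

lemma ext_bag_old: "t \<in> N \<Longrightarrow> ext_bag t = bag t"
  unfolding ext_bag_def by simp

lemma ext_bag_new: "ext_bag (M + i) = cnbh V E (comp i)"
  using fresh[of "M + i"] unfolding ext_bag_def by auto

lemma card_ext_bag_new: "card (ext_bag (M + i)) \<le> card (comp i) + card (nbh V E (comp i))"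
  unfolding ext_bag_new cnbh_def by (rule card_Un_le)

lemma comp_in_comps: "i < c \<Longrightarrow> comp i \<in> comps V E X"
  using comp_enum unfolding bij_betw_def by auto

lemma comp_eqD: "i < c \<Longrightarrow> j < c \<Longrightarrow> comp i = comp j \<Longrightarrow> i = j"
  using comp_enum unfolding bij_betw_def inj_on_def by auto

lemma comp_subset_outside: "i < c \<Longrightarrow> comp i \<subseteq> V - X"
  using comp_in_comps unfolding comps_def by blast

lemma exists_comp:
  assumes "v \<in> V" "v \<notin> X"
  obtains i where "i < c" "v \<in> comp i"
proof -
  obtain C where "C \<in> comps V E X" "v \<in> C" using comps_cover[OF sym assms] .
  then show ?thesis using comp_enum that unfolding bij_betw_def by (metis atLeastLessThan_iff imageE)
qed

lemma ext_tree: "is_tree ext_nodes ext_edges"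
  using torso_decomp fresh root unfolding tree_decomp_def
  by (intro is_tree_attach_leaves) auto

lemma ext_bag_subset:
  assumes "t \<in> ext_nodes"
  shows "ext_bag t \<subseteq> V"
proof (cases "t \<in> N")
  case True
  then show ?thesis using torso_decomp X_subset unfolding ext_bag_def tree_decomp_def by auto
next
  case False
  then obtain i where "i < c" "t = M + i" using assms new_node_iff by blast
  then show ?thesis using comp_subset_outside ext_bag_new unfolding cnbh_def nbh_def by auto
qed

lemma ext_cover: "v \<in> V \<Longrightarrow> \<exists>t\<in>ext_nodes. v \<in> ext_bag t"
proof (cases "v \<in> X")
  case True
  then obtain t where "t \<in> N" "v \<in> bag t" using torso_decomp unfolding tree_decomp_def by blast
  then show ?thesis unfolding ext_bag_def by auto
next
  case False
  assume "v \<in> V"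
  then obtain i where "i < c" "v \<in> comp i" using False by (rule exists_comp)
  then show ?thesis using ext_bag_new[of i] unfolding cnbh_def by (intro bexI[of _ "M + i"]) auto
qed

lemma ext_edge_outside_X:
  assumes "u \<in> V" "v \<in> V" "E u v" "v \<notin> X"
  shows "\<exists>t\<in>ext_nodes. u \<in> ext_bag t \<and> v \<in> ext_bag t"
proof -
  obtain i where i: "i < c" "v \<in> comp i" using assms(2,4) by (rule exists_comp)
  then have "u \<in> cnbh V E (comp i)" "v \<in> cnbh V E (comp i)"
    using assms(1,3) sym unfolding cnbh_def nbh_def by auto
  then show ?thesis using i(1) ext_bag_new[of i] by (intro bexI[of _ "M + i"]) auto
qed

lemma ext_edge:
  assumes "u \<in> V" "v \<in> V" "E u v"
  shows "\<exists>t\<in>ext_nodes. u \<in> ext_bag t \<and> v \<in> ext_bag t"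
proof (cases "u \<in> X \<and> v \<in> X")
  case True
  then have "u = v \<or> torsoE V E X u v" using assms(3) unfolding torsoE_def by blast
  then obtain t where "t \<in> N" "u \<in> bag t" "v \<in> bag t"
    using True torso_decomp unfolding tree_decomp_def by blast
  then show ?thesis unfolding ext_bag_def by auto
next
  case False
  then show ?thesis
    using ext_edge_outside_X[OF assms] ext_edge_outside_X[OF assms(2,1)] assms(3) sym by blast
qed

text \<open>A vertex of \<open>X\<close> lies in the new leaf of \<open>C\<close> only if it lies in \<open>N(C)\<close>, hence in the
  bag the leaf is attached to.\<close>
lemma ext_occurrences_conn_X:
  assumes "v \<in> X"
  shows "conn_in (\<lambda>a b. {a, b} \<in> ext_edges) {t \<in> ext_nodes. v \<in> ext_bag t}"
proof -
  let ?old = "{t \<in> N. v \<in> bag t}" and ?new = "{t \<in> {M..<M + c}. v \<in> ext_bag t}"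
  have "conn_in (\<lambda>a b. {a, b} \<in> TE) ?old" using torso_decomp assms unfolding tree_decomp_def by blast
  then have "conn_in (\<lambda>a b. {a, b} \<in> ext_edges) ?old" by (rule conn_in_mono) auto
  moreover have "\<forall>t\<in>?new. \<exists>s\<in>?old. {t, s} \<in> ext_edges \<and> {s, t} \<in> ext_edges"
  proof
    fix t assume t: "t \<in> ?new"
    then obtain i where i: "i < c" "t = M + i" using new_node_iff by blast
    then have "v \<in> cnbh V E (comp i)" using t ext_bag_new by simp
    then have "v \<in> nbh V E (comp i)"
      using assms comp_subset_outside[OF i(1)] unfolding cnbh_def by blast
    then have "root i \<in> ?old" using root[OF i(1)] by blast
    moreover have "{t, root i} \<in> ext_edges" "{root i, t} \<in> ext_edges"
      using i by (auto simp: insert_commute)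
    ultimately show "\<exists>s\<in>?old. {t, s} \<in> ext_edges \<and> {s, t} \<in> ext_edges" by blast
  qed
  ultimately have "conn_in (\<lambda>a b. {a, b} \<in> ext_edges) (?old \<union> ?new)" by (rule conn_in_attach)
  moreover have "{t \<in> ext_nodes. v \<in> ext_bag t} = ?old \<union> ?new"
    by (auto simp: ext_bag_def)
  ultimately show ?thesis by simp
qed

lemma ext_occurrences_outside_X:
  assumes "v \<notin> X" "i < c" "v \<in> comp i"
  shows "{t \<in> ext_nodes. v \<in> ext_bag t} = {M + i}"
proof (intro equalityI subsetI)
  fix t assume t: "t \<in> {t \<in> ext_nodes. v \<in> ext_bag t}"
  have "t \<notin> N"
  proof
    assume "t \<in> N"
    then have "v \<in> bag t" "bag t \<subseteq> X" using t torso_decomp unfolding ext_bag_def tree_decomp_def by auto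
    then show False using assms(1) by blast
  qed
  then obtain j where j: "j < c" "t = M + j" using t new_node_iff by blast
  then have "v \<in> cnbh V E (comp j)" using t ext_bag_new by simp
  then have "v \<in> comp j"
    using assms(1) nbh_comps_subset[OF sym comp_in_comps[OF j(1)]] unfolding cnbh_def by blast
  then have "comp j = comp i"
    using comps_eq_if_meet[OF comp_in_comps[OF j(1)] comp_in_comps[OF assms(2)]] assms(3) by blast
  then show "t \<in> {M + i}" using comp_eqD[OF j(1) assms(2)] j(2) by simp
next
  fix t assume "t \<in> {M + i}"
  then show "t \<in> {t \<in> ext_nodes. v \<in> ext_bag t}"
    using assms(2,3) ext_bag_new unfolding cnbh_def by simp
qed

lemma ext_occurrences_conn:
  assumes "v \<in> V"
  shows "conn_in (\<lambda>a b. {a, b} \<in> ext_edges) {t \<in> ext_nodes. v \<in> ext_bag t}"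
proof (cases "v \<in> X")
  case True
  then show ?thesis by (rule ext_occurrences_conn_X)
next
  case False
  obtain i where "i < c" "v \<in> comp i" using assms False by (rule exists_comp)
  then show ?thesis using ext_occurrences_outside_X[OF False] by (simp add: conn_in_singleton)
qed

lemma ext_tree_decomp: "tree_decomp V E ext_nodes ext_edges ext_bag"
  unfolding tree_decomp_def
  using ext_tree ext_bag_subset ext_cover ext_edge ext_occurrences_conn by blast

end

text \<open>If all components of \<open>G - X\<close> have at most \<open>q\<close> vertices, the bags \<open>N[C]\<close> of the new
  leaves have at most \<open>q + k + 1\<close> elements.\<close>
lemma treewidth_le_of_small_comps:
  assumes "finite V" and sym: "\<And>a b. E a b = E b a" and "X \<subseteq> V"
    and tw: "torso_width V E X \<le> int k" and small: "\<forall>C\<in>comps V E X. card C \<le> q"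
  shows "treewidth V E \<le> int q + int k"
proof -
  obtain N TE bag where td: "tree_decomp X (torsoE V E X) N TE bag"
    and bd: "\<forall>t\<in>N. card (bag t) \<le> k + 1"
    using tw unfolding torso_width_def by (rule treewidth_leE)
  obtain comp where enum: "bij_betw comp {0..<card (comps V E X)} (comps V E X)"
    using ex_bij_betw_nat_finite[OF finite_comps[OF assms(1)]] by blast
  define root where "root i = (SOME t. t \<in> N \<and> nbh V E (comp i) \<subseteq> bag t)" for i
  have root: "root i \<in> N \<and> nbh V E (comp i) \<subseteq> bag (root i)" if "i < card (comps V E X)" for i
  proof -
    have "\<exists>t. t \<in> N \<and> nbh V E (comp i) \<subseteq> bag t"
      using nbh_comp_in_bag[OF sym td bij_betw_apply[OF enum]] that by auto
    then show ?thesis unfolding root_def by (rule someI_ex)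
  qed
  have "finite N" using td unfolding tree_decomp_def is_tree_def by blast
  then have fresh: "t < Suc (Max N)" if "t \<in> N" for t
    using that by (simp add: less_Suc_eq_le)
  interpret comps_attachment V E X N TE bag "card (comps V E X)" comp root "Suc (Max N)"
    using sym assms(3) td enum root fresh by (rule comps_attachment.intro)
  have finX: "finite X" using assms(1,3) by (rule finite_subset[rotated])
  have bags: "\<forall>t\<in>ext_nodes. card (ext_bag t) \<le> q + k + 1"
  proof
    fix t assume t: "t \<in> ext_nodes"
    show "card (ext_bag t) \<le> q + k + 1"
    proof (cases "t \<in> N")
      case True
      then show ?thesis using bd ext_bag_old by fastforce
    next
      case False
      then have "t \<in> {Suc (Max N)..<Suc (Max N) + card (comps V E X)}" using t by blast
      then obtain i where i: "i < card (comps V E X)" "t = Suc (Max N) + i"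
        unfolding new_node_iff by blast
      have "card (comp i) \<le> q" "card (nbh V E (comp i)) \<le> k + 1"
        using small card_nbh_comp_le[OF sym finX tw] comp_in_comps[OF i(1)] by auto
      then show ?thesis unfolding i(2) using card_ext_bag_new[of i] by linarith
    qed
  qed
  have "treewidth V E \<le> int (q + k + 1) - 1"
    by (rule treewidth_le_tree_decomp[OF ext_tree_decomp bags])
  then show ?thesis by simp
qed

lemma card_comp_le_outside:
  assumes "finite V" and sym: "\<And>a b. E a b = E b a"
    and C: "C \<in> comps V E X" and C': "C' \<in> comps V E X" "C' \<noteq> C"
  shows "card C' \<le> card (V - cnbh V E C)"
proof -
  have "C' \<inter> C = {}" using comps_eq_if_meet[OF C'(1) C] C'(2) by blast
  moreover have "nbh V E C \<subseteq> X" using sym C by (rule nbh_comps_subset)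
  moreover have "C' \<subseteq> V - X" using C'(1) unfolding comps_def by blast
  ultimately have "C' \<subseteq> V - cnbh V E C" unfolding cnbh_def by blast
  then show ?thesis using assms(1) by (simp add: card_mono)
qed

lemma igE_sym: "igE I a b = igE I b a"
  by (cases a; cases b) auto

lemma finite_igV: "csp_instance I \<Longrightarrow> finite (igV I)"
  unfolding csp_instance_def igV_def vars_def by auto

text \<open>The separation is \<open>(C, N(C), V - N[C])\<close>.\<close>
lemma has_separation_of_comp:
  assumes C: "C \<in> comps (igV I) (igE I) X" and X: "X \<subseteq> Inl ` vars I"
    and "card (nbh (igV I) (igE I) C) \<le> k"
    and "q \<le> card C" and "q \<le> card (igV I - cnbh (igV I) (igE I) C)"
  shows "has_separation I q k"
proof -
  let ?V = "igV I" and ?E = "igE I"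
  let ?S = "nbh ?V ?E C" and ?B = "?V - cnbh ?V ?E C"
  have sym: "\<And>a b. ?E a b = ?E b a" by (rule igE_sym)
  have "C \<subseteq> ?V" using C unfolding comps_def by blast
  moreover have "?S \<subseteq> X" using sym C by (rule nbh_comps_subset)
  moreover have "nbh ?V ?E ?B \<subseteq> ?S"
  proof
    fix v assume v: "v \<in> nbh ?V ?E ?B"
    then obtain b where b: "b \<in> ?B" "?E b v" "v \<in> ?V" "v \<notin> ?B" unfolding nbh_def by blast
    have "v \<notin> C"
    proof
      assume "v \<in> C"
      then have "b \<in> cnbh ?V ?E C" using b sym unfolding cnbh_def nbh_def by blast
      then show False using b(1) by blast
    qed
    then show "v \<in> ?S" using b(3,4) unfolding cnbh_def by blast
  qed
  ultimately have "separation I q k C ?S ?B"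
    using assms X unfolding separation_def cnbh_def nbh_def by blast
  then show ?thesis unfolding has_separation_def by blast
qed

lemma exists_unique_large_comp:
  assumes "csp_instance I" and no_sep: "\<not> has_separation I q (k + 1)"
    and large_tw: "\<not> treewidth (igV I) (igE I) \<le> int q + int k"
    and "X \<subseteq> vars I" and width: "bd_width I X \<le> int k"
  shows "\<exists>C \<in> comps (igV I) (igE I) (Inl ` X). q + 1 \<le> card C \<and>
    (\<forall>C' \<in> comps (igV I) (igE I) (Inl ` X). q + 1 \<le> card C' \<longrightarrow> C' = C) \<and>
    card (igV I - cnbh (igV I) (igE I) C) \<le> q"
proof -
  let ?V = "igV I" and ?E = "igE I" and ?X = "Inl ` X :: ('a + ('a, 'b) constr) set"
  have finV: "finite ?V" using assms(1) by (rule finite_igV)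
  have X_vars: "?X \<subseteq> Inl ` vars I" using assms(4) by blast
  then have X_V: "?X \<subseteq> ?V" unfolding igV_def by blast
  then have finX: "finite ?X" using finV by (rule finite_subset)
  have tw: "torso_width ?V ?E ?X \<le> int k" using width unfolding bd_width_def .
  have unbalanced: "card C < q \<or> card (?V - cnbh ?V ?E C) < q" if C: "C \<in> comps ?V ?E ?X" for C
  proof (rule ccontr)
    assume "\<not> ?thesis"
    then have "has_separation I q (k + 1)"
      using has_separation_of_comp[OF C X_vars card_nbh_comp_le[OF igE_sym finX tw C]] by simp
    with no_sep show False ..
  qed
  have "\<not> (\<forall>C\<in>comps ?V ?E ?X. card C \<le> q)"
    using treewidth_le_of_small_comps[OF finV igE_sym X_V tw] large_tw by blast
  then obtain C where C: "C \<in> comps ?V ?E ?X" "q + 1 \<le> card C" by force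
  then have rest: "card (?V - cnbh ?V ?E C) < q" using unbalanced[OF C(1)] by linarith
  have "C' = C" if C': "C' \<in> comps ?V ?E ?X" "q + 1 \<le> card C'" for C'
  proof (rule ccontr)
    assume "C' \<noteq> C"
    with finV igE_sym C(1) C'(1) have "card C' \<le> card (?V - cnbh ?V ?E C)"
      by (rule card_comp_le_outside)
    then show False using rest C'(2) by linarith
  qed
  moreover have "card (?V - cnbh ?V ?E C) \<le> q" using rest by linarith
  ultimately show ?thesis using C by blast
qed

theorem lemma11:
  fixes \<Gamma> :: "('d::finite) relation set" and I :: "('v, 'd) csp_inst" and q k :: nat
  assumes "constraint_language \<Gamma>"
    and "csp_instance I"
    and "\<not> has_separation I q (k + 1)"
  shows "nice \<Gamma> I q k"
proof (cases "treewidth (igV I) (igE I) \<le> int q + int k")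
  case False
  show ?thesis
    unfolding nice_def
  proof (intro disjI2 impI)
    assume "\<exists>X. strong_backdoor \<Gamma> I X \<and> bd_width I X \<le> int k"
    then obtain X where X: "strong_backdoor \<Gamma> I X" "bd_width I X \<le> int k" by blast
    then have "X \<subseteq> vars I" unfolding strong_backdoor_def by blast
    from exists_unique_large_comp[OF assms(2,3) False this X(2)]
    show "\<exists>X. strong_backdoor \<Gamma> I X \<and> bd_width I X \<le> int k \<and>
      (\<exists>C \<in> comps (igV I) (igE I) (Inl ` X). q + 1 \<le> card C \<and>
         (\<forall>C' \<in> comps (igV I) (igE I) (Inl ` X). q + 1 \<le> card C' \<longrightarrow> C' = C) \<and>
         card (igV I - cnbh (igV I) (igE I) C) \<le> q)"
      by (intro exI[of _ X] conjI X)
  qed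
qed (simp add: nice_def)

end
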